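(* Let $(L,I)$ and $(M,J)$ be integral systems on sets $X$ and $Y$ respectively, let $\rho:X\to[0,\infty)$ and let $\phi:X\to Y$ be a map such that $\rho\cdot(g\circ\phi)\in L$ and $I(\rho\cdot(g\circ\phi))=J(g)$ for every $g\in M$. Then for every $g\in M^1$ one has $\rho\cdot(g\circ\phi)\in L^1$ and $I^1(\rho\cdot(g\circ\phi))=J^1(g)$.
   Context: An integral system $(L,I)$ on a set $X$ consists of a linear lattice $L$ (a real vector space of real-valued functions on $X$ closed under pointwise $\max$ and $\min$) and a preintegral $I$ (a positive linear functional on $L$ with $I(f_n)\to0$ whenever $f_n\in L$, $f_n\downarrow0$ pointwise). $L_\uparrow$ (resp. $L_\downarrow$) is the set of $f:X\to(-\infty,\infty]$ (resp. $[-\infty,\infty)$) that are pointwise limits of increasing (resp. decreasing) sequences $f_n\in L$, with $I_\uparrow(f)$ (resp. $I_\downarrow(f)$) $=\lim I(f_n)$. Upper and lower integrals: $\overline I(f)=\inf\{I_\uparrow(g):g\in L_\uparrow,f\le g\}$, $\underline I(f)=\sup\{I_\downarrow(g):g\in L_\downarrow,g\le f\}$. A function $f:X\to\mathbb R$ is integrable if $\underline I(f)=\overline I(f)\in\mathbb R$; $L^1$ is the set of integrable functions and $I^1(f)$ the common value (Daniell extension). $(M^1,J^1)$ is defined in the same way from $(M,J)$. Convention: $0\cdot(\pm\infty)=0$. *)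

theory Defs
  imports Complex_Main "HOL-Library.Extended_Real"
begin

definition linear_lattice :: "('a \<Rightarrow> real) set \<Rightarrow> bool" where
  "linear_lattice L \<longleftrightarrow>
     (\<lambda>x. 0) \<in> L \<and>
     (\<forall>f\<in>L. \<forall>g\<in>L. (\<lambda>x. f x + g x) \<in> L) \<and>
     (\<forall>f\<in>L. \<forall>c::real. (\<lambda>x. c * f x) \<in> L) \<and>
     (\<forall>f\<in>L. \<forall>g\<in>L. (\<lambda>x. max (f x) (g x)) \<in> L \<and> (\<lambda>x. min (f x) (g x)) \<in> L)"

definition preintegral :: "('a \<Rightarrow> real) set \<Rightarrow> (('a \<Rightarrow> real) \<Rightarrow> real) \<Rightarrow> bool" where
  "preintegral L I \<longleftrightarrow>
     (\<forall>f\<in>L. \<forall>g\<in>L. I (\<lambda>x. f x + g x) = I f + I g) \<and>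
     (\<forall>f\<in>L. \<forall>c::real. I (\<lambda>x. c * f x) = c * I f) \<and>
     (\<forall>f\<in>L. (\<forall>x. 0 \<le> f x) \<longrightarrow> 0 \<le> I f) \<and>
     (\<forall>f::nat \<Rightarrow> 'a \<Rightarrow> real. (\<forall>n. f n \<in> L) \<and> (\<forall>n x. f (Suc n) x \<le> f n x) \<and>
        (\<forall>x. (\<lambda>n. f n x) \<longlonglongrightarrow> 0) \<longrightarrow> (\<lambda>n. I (f n)) \<longlonglongrightarrow> 0)"

definition integral_system :: "('a \<Rightarrow> real) set \<Rightarrow> (('a \<Rightarrow> real) \<Rightarrow> real) \<Rightarrow> bool" where
  "integral_system L I \<longleftrightarrow> linear_lattice L \<and> preintegral L I"

definition incr_approx :: "('a \<Rightarrow> real) set \<Rightarrow> (nat \<Rightarrow> 'a \<Rightarrow> real) \<Rightarrow> ('a \<Rightarrow> ereal) \<Rightarrow> bool" where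
  "incr_approx L fs f \<longleftrightarrow> (\<forall>n. fs n \<in> L) \<and> (\<forall>n x. fs n x \<le> fs (Suc n) x) \<and>
     (\<forall>x. (\<lambda>n. ereal (fs n x)) \<longlonglongrightarrow> f x)"

definition decr_approx :: "('a \<Rightarrow> real) set \<Rightarrow> (nat \<Rightarrow> 'a \<Rightarrow> real) \<Rightarrow> ('a \<Rightarrow> ereal) \<Rightarrow> bool" where
  "decr_approx L fs f \<longleftrightarrow> (\<forall>n. fs n \<in> L) \<and> (\<forall>n x. fs (Suc n) x \<le> fs n x) \<and>
     (\<forall>x. (\<lambda>n. ereal (fs n x)) \<longlonglongrightarrow> f x)"

definition L_up :: "('a \<Rightarrow> real) set \<Rightarrow> ('a \<Rightarrow> ereal) set" where
  "L_up L = {f. \<exists>fs. incr_approx L fs f}"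

definition L_down :: "('a \<Rightarrow> real) set \<Rightarrow> ('a \<Rightarrow> ereal) set" where
  "L_down L = {f. \<exists>fs. decr_approx L fs f}"

text \<open>I_up f = lim I(f_n) for any increasing approximating sequence
  (independent of the choice of sequence for a preintegral).\<close>
definition I_up :: "('a \<Rightarrow> real) set \<Rightarrow> (('a \<Rightarrow> real) \<Rightarrow> real) \<Rightarrow> ('a \<Rightarrow> ereal) \<Rightarrow> ereal" where
  "I_up L I f = (SOME v. \<exists>fs. incr_approx L fs f \<and> (\<lambda>n. ereal (I (fs n))) \<longlonglongrightarrow> v)"

definition I_down :: "('a \<Rightarrow> real) set \<Rightarrow> (('a \<Rightarrow> real) \<Rightarrow> real) \<Rightarrow> ('a \<Rightarrow> ereal) \<Rightarrow> ereal" where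
  "I_down L I f = (SOME v. \<exists>fs. decr_approx L fs f \<and> (\<lambda>n. ereal (I (fs n))) \<longlonglongrightarrow> v)"

definition upper_integral :: "('a \<Rightarrow> real) set \<Rightarrow> (('a \<Rightarrow> real) \<Rightarrow> real) \<Rightarrow> ('a \<Rightarrow> ereal) \<Rightarrow> ereal" where
  "upper_integral L I f = Inf {I_up L I g | g. g \<in> L_up L \<and> (\<forall>x. f x \<le> g x)}"

definition lower_integral :: "('a \<Rightarrow> real) set \<Rightarrow> (('a \<Rightarrow> real) \<Rightarrow> real) \<Rightarrow> ('a \<Rightarrow> ereal) \<Rightarrow> ereal" where
  "lower_integral L I f = Sup {I_down L I g | g. g \<in> L_down L \<and> (\<forall>x. g x \<le> f x)}"

definition L1 :: "('a \<Rightarrow> real) set \<Rightarrow> (('a \<Rightarrow> real) \<Rightarrow> real) \<Rightarrow> ('a \<Rightarrow> real) set" where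
  "L1 L I = {f. lower_integral L I (\<lambda>x. ereal (f x)) = upper_integral L I (\<lambda>x. ereal (f x))
               \<and> \<bar>upper_integral L I (\<lambda>x. ereal (f x))\<bar> \<noteq> \<infinity>}"

definition I1 :: "('a \<Rightarrow> real) set \<Rightarrow> (('a \<Rightarrow> real) \<Rightarrow> real) \<Rightarrow> ('a \<Rightarrow> real) \<Rightarrow> real" where
  "I1 L I f = real_of_ereal (upper_integral L I (\<lambda>x. ereal (f x)))"

end

theory Submission
  imports Defs
begin

text \<open>
  Pulling back by \<open>g \<mapsto> \<rho> \<cdot> (g \<circ> \<phi>)\<close> is monotone (as \<open>\<rho> \<ge> 0\<close>) and maps monotone
  approximations in \<open>M\<close> to monotone approximations in \<open>L\<close> with the same integrals, so it maps
  every upper bound \<open>h \<in> M\<^sub>\<up>\<close> of \<open>g\<close> to an upper bound of the pullback with the same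
  \<open>I\<^sub>\<up>\<close>-value, and dually for lower bounds. Hence
  \<open>J\<^sub>*(g) \<le> I\<^sub>*(\<rho>(g\<circ>\<phi>)) \<le> I\<^sup>*(\<rho>(g\<circ>\<phi>)) \<le> J\<^sup>*(g)\<close>, and for integrable \<open>g\<close> all four
  coincide. The only real analysis is the middle inequality, a Dini-type consequence of the
  continuity of the preintegral; it also shows that \<open>I\<^sub>\<up>\<close> and \<open>I\<^sub>\<down>\<close> do not depend on the
  chosen approximating sequence.
\<close>

locale daniell_system =
  fixes L :: "('a \<Rightarrow> real) set" and I :: "('a \<Rightarrow> real) \<Rightarrow> real"
  assumes integral_system: "integral_system L I"
begin

lemma zero_mem: "(\<lambda>x. 0) \<in> L"
  and add_mem: "f \<in> L \<Longrightarrow> g \<in> L \<Longrightarrow> (\<lambda>x. f x + g x) \<in> L"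
  and scale_mem: "f \<in> L \<Longrightarrow> (\<lambda>x. c * f x) \<in> L"
  and max_mem: "f \<in> L \<Longrightarrow> g \<in> L \<Longrightarrow> (\<lambda>x. max (f x) (g x)) \<in> L"
  and I_add: "f \<in> L \<Longrightarrow> g \<in> L \<Longrightarrow> I (\<lambda>x. f x + g x) = I f + I g"
  and I_scale: "f \<in> L \<Longrightarrow> I (\<lambda>x. c * f x) = c * I f"
  and I_nonneg: "f \<in> L \<Longrightarrow> (\<And>x. 0 \<le> f x) \<Longrightarrow> 0 \<le> I f"
  and I_decreasing_to_zero: "(\<And>n. fs n \<in> L) \<Longrightarrow> (\<And>n x. fs (Suc n) x \<le> fs n x) \<Longrightarrow>
        (\<And>x. (\<lambda>n. fs n x) \<longlonglongrightarrow> 0) \<Longrightarrow> (\<lambda>n. I (fs n)) \<longlonglongrightarrow> 0"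
  using integral_system
  unfolding integral_system_def linear_lattice_def preintegral_def by blast+

lemma diff_mem: "f \<in> L \<Longrightarrow> g \<in> L \<Longrightarrow> (\<lambda>x. f x - g x) \<in> L"
  and I_diff: "f \<in> L \<Longrightarrow> g \<in> L \<Longrightarrow> I (\<lambda>x. f x - g x) = I f - I g"
proof -
  assume f: "f \<in> L" and g: "g \<in> L"
  have diff_eq: "(\<lambda>x. f x - g x) = (\<lambda>x. f x + (-1) * g x)" by simp
  show "(\<lambda>x. f x - g x) \<in> L"
    unfolding diff_eq using add_mem[OF f scale_mem[OF g]] .
  have "I (\<lambda>x. f x + (-1) * g x) = I f + I (\<lambda>x. (-1) * g x)"
    by (rule I_add[OF f scale_mem[OF g]])
  also have "I (\<lambda>x. (-1) * g x) = - I g"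
    using I_scale[OF g, of "-1"] by simp
  finally show "I (\<lambda>x. f x - g x) = I f - I g"
    unfolding diff_eq by simp
qed

lemma I_mono:
  assumes f: "f \<in> L" and g: "g \<in> L" and le: "\<And>x. f x \<le> g x"
  shows "I f \<le> I g"
proof -
  have "0 \<le> I (\<lambda>x. g x - f x)"
    by (rule I_nonneg[OF diff_mem[OF g f]]) (simp add: le)
  then show ?thesis by (simp add: I_diff[OF g f])
qed

text \<open>Dini-type form of the continuity axiom: the positive parts \<open>max u\<^sub>m 0\<close> decrease to \<open>0\<close>.\<close>
lemma I_lower_bound_nonpos:
  assumes u: "\<And>m. u m \<in> L" and dec: "\<And>m x. u (Suc m) x \<le> u m x"
    and small: "\<And>x \<epsilon>. \<epsilon> > 0 \<Longrightarrow> \<exists>m. u m x < \<epsilon>"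
    and bound: "\<And>m. c \<le> I (u m)"
  shows "c \<le> 0"
proof -
  define e where "e m = (\<lambda>x. max (u m x) 0)" for m
  have e_mem: "e m \<in> L" for m
    unfolding e_def using max_mem[OF u zero_mem] .
  have u_antimono: "u n x \<le> u m x" if "m \<le> n" for m n x
    using lift_Suc_antimono_le[of "\<lambda>k. u k x"] dec that by blast
  have "(\<lambda>m. e m x) \<longlonglongrightarrow> 0" for x
  proof (rule LIMSEQ_I)
    fix r :: real assume "0 < r"
    then obtain m where "u m x < r" using small by blast
    then have "norm (e n x - 0) < r" if "m \<le> n" for n
      using u_antimono[OF that, of x] \<open>0 < r\<close> unfolding e_def by simp
    then show "\<exists>no. \<forall>n\<ge>no. norm (e n x - 0) < r" by blast
  qed
  then have "(\<lambda>m. I (e m)) \<longlonglongrightarrow> 0"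
    using I_decreasing_to_zero[OF e_mem] dec unfolding e_def by (simp add: max.coboundedI1)
  moreover have "c \<le> I (e m)" for m
    using bound[of m] I_mono[OF u e_mem, of m m] unfolding e_def by fastforce
  ultimately show ?thesis using LIMSEQ_le_const by blast
qed

end

lemma incr_approx_le:
  assumes "incr_approx L fs f"
  shows "ereal (fs n x) \<le> f x"
proof -
  have "\<forall>k\<ge>n. ereal (fs n x) \<le> ereal (fs k x)"
    using assms lift_Suc_mono_le[of "\<lambda>k. fs k x"] unfolding incr_approx_def by simp
  then show ?thesis
    using assms LIMSEQ_le_const unfolding incr_approx_def by blast
qed

lemma decr_approx_ge:
  assumes "decr_approx L fs f"
  shows "f x \<le> ereal (fs n x)"
proof -
  have "\<forall>k\<ge>n. ereal (fs k x) \<le> ereal (fs n x)"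
    using assms lift_Suc_antimono_le[of "\<lambda>k. fs k x"] unfolding decr_approx_def by simp
  then show ?thesis
    using assms LIMSEQ_le_const2 unfolding decr_approx_def by blast
qed

lemma incr_approx_const: "f \<in> L \<Longrightarrow> incr_approx L (\<lambda>n. f) (\<lambda>x. ereal (f x))"
  and decr_approx_const: "f \<in> L \<Longrightarrow> decr_approx L (\<lambda>n. f) (\<lambda>x. ereal (f x))"
  unfolding incr_approx_def decr_approx_def by simp_all

lemma approx_gap_small:
  assumes gs: "decr_approx L gs g" and hs: "incr_approx L hs h" and le: "g x \<le> h x"
    and "(\<epsilon>::real) > 0"
  shows "\<exists>m. gs m x - hs m x < \<epsilon>"
proof -
  \<comment> \<open>\<open>g x < \<infinity>\<close> and \<open>-\<infinity> < h x\<close> because the approximations are real-valued\<close>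
  obtain r where r1: "g x < ereal (r + \<epsilon>/2)" and r2: "ereal (r - \<epsilon>/2) < h x"
  proof (cases "g x")
    case (real a)
    show thesis
    proof (rule that[of a])
      show "g x < ereal (a + \<epsilon>/2)" using real \<open>\<epsilon> > 0\<close> by simp
      have "ereal (a - \<epsilon>/2) < g x" using real \<open>\<epsilon> > 0\<close> by simp
      then show "ereal (a - \<epsilon>/2) < h x" using le by (rule less_le_trans)
    qed
  next
    case PInf
    then show thesis using decr_approx_ge[OF gs, of x 0] by simp
  next
    case MInf
    show thesis
    proof (rule that[of "hs 0 x - \<epsilon>"])
      show "g x < ereal (hs 0 x - \<epsilon> + \<epsilon>/2)" using MInf by simp
      have "ereal (hs 0 x - \<epsilon> - \<epsilon>/2) < ereal (hs 0 x)" using \<open>\<epsilon> > 0\<close> by simp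
      then show "ereal (hs 0 x - \<epsilon> - \<epsilon>/2) < h x"
        using incr_approx_le[OF hs] by (rule less_le_trans)
    qed
  qed
  have gs_lim: "(\<lambda>n. ereal (gs n x)) \<longlonglongrightarrow> g x" and hs_lim: "(\<lambda>n. ereal (hs n x)) \<longlonglongrightarrow> h x"
    using gs hs unfolding decr_approx_def incr_approx_def by auto
  have "eventually (\<lambda>n. ereal (gs n x) < ereal (r + \<epsilon>/2) \<and>
      ereal (r - \<epsilon>/2) < ereal (hs n x)) sequentially"
    using order_tendstoD(2)[OF gs_lim r1] order_tendstoD(1)[OF hs_lim r2] by (rule eventually_conj)
  then obtain N where "\<forall>n\<ge>N. ereal (gs n x) < ereal (r + \<epsilon>/2) \<and> ereal (r - \<epsilon>/2) < ereal (hs n x)"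
    unfolding eventually_sequentially by blast
  then have "gs N x < r + \<epsilon>/2" "r - \<epsilon>/2 < hs N x" by auto
  then show ?thesis by (intro exI[of _ N]) simp
qed

context daniell_system
begin

lemma INF_approx_le_SUP_approx:
  assumes gs: "decr_approx L gs g" and hs: "incr_approx L hs h" and le: "\<And>x. g x \<le> h x"
  shows "(INF n. ereal (I (gs n))) \<le> (SUP n. ereal (I (hs n)))"
proof (cases "(INF n. ereal (I (gs n))) = -\<infinity> \<or> (SUP n. ereal (I (hs n))) = \<infinity>")
  case False
  moreover have "(INF n. ereal (I (gs n))) \<le> ereal (I (gs 0))"
    and "ereal (I (hs 0)) \<le> (SUP n. ereal (I (hs n)))"
    by (auto intro: INF_lower SUP_upper)
  ultimately obtain t s where t: "(INF n. ereal (I (gs n))) = ereal t"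
    and s: "(SUP n. ereal (I (hs n))) = ereal s"
    by (cases "INF n. ereal (I (gs n))"; cases "SUP n. ereal (I (hs n))") auto
  have gs_mem: "gs n \<in> L" and hs_mem: "hs n \<in> L"
    and gs_dec: "gs (Suc n) x \<le> gs n x" and hs_inc: "hs n x \<le> hs (Suc n) x" for n x
    using gs hs unfolding decr_approx_def incr_approx_def by auto
  have "t - s \<le> 0"
  proof (rule I_lower_bound_nonpos[of "\<lambda>n x. gs n x - hs n x"])
    show "(\<lambda>x. gs n x - hs n x) \<in> L" for n using diff_mem gs_mem hs_mem .
    show "gs (Suc n) x - hs (Suc n) x \<le> gs n x - hs n x" for n x
      using gs_dec hs_inc by (rule diff_mono)
    show "\<exists>n. gs n x - hs n x < \<epsilon>" if "\<epsilon> > 0" for x \<epsilon>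
      using approx_gap_small[OF gs hs le that] .
    show "t - s \<le> I (\<lambda>x. gs n x - hs n x)" for n
    proof -
      have "ereal t \<le> ereal (I (gs n))" "ereal (I (hs n)) \<le> ereal s"
        unfolding t[symmetric] s[symmetric] by (auto intro: INF_lower SUP_upper)
      then show ?thesis using I_diff[OF gs_mem hs_mem] by simp
    qed
  qed
  then show ?thesis using t s by simp
qed auto

lemma SUP_incr_approx_mono:
  assumes fs: "incr_approx L fs f" and hs: "incr_approx L hs h" and le: "\<And>x. f x \<le> h x"
  shows "(SUP n. ereal (I (fs n))) \<le> (SUP n. ereal (I (hs n)))"
proof (rule SUP_least)
  fix n
  have fs_mem: "fs n \<in> L" using fs unfolding incr_approx_def by blast
  have "ereal (fs n x) \<le> h x" for x using incr_approx_le[OF fs] le order_trans by blast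
  then have "(INF m::nat. ereal (I (fs n))) \<le> (SUP n. ereal (I (hs n)))"
    by (rule INF_approx_le_SUP_approx[OF decr_approx_const[OF fs_mem] hs])
  then show "ereal (I (fs n)) \<le> (SUP n. ereal (I (hs n)))" by simp
qed

lemma INF_decr_approx_mono:
  assumes gs: "decr_approx L gs g" and ks: "decr_approx L ks k" and le: "\<And>x. g x \<le> k x"
  shows "(INF n. ereal (I (gs n))) \<le> (INF n. ereal (I (ks n)))"
proof (rule INF_greatest)
  fix n
  have ks_mem: "ks n \<in> L" using ks unfolding decr_approx_def by blast
  have "g x \<le> ereal (ks n x)" for x using decr_approx_ge[OF ks] le order_trans by blast
  then have "(INF n. ereal (I (gs n))) \<le> (SUP m::nat. ereal (I (ks n)))"
    by (rule INF_approx_le_SUP_approx[OF gs incr_approx_const[OF ks_mem]])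
  then show "(INF n. ereal (I (gs n))) \<le> ereal (I (ks n))" by simp
qed

lemma I_up_eq_SUP:
  assumes fs: "incr_approx L fs f"
  shows "I_up L I f = (SUP n. ereal (I (fs n)))"
proof -
  have lim_SUP: "(\<lambda>n. ereal (I (gs n))) \<longlonglongrightarrow> (SUP n. ereal (I (gs n)))"
    if "incr_approx L gs f" for gs
    using that by (intro LIMSEQ_SUP incseq_SucI) (simp add: I_mono incr_approx_def)
  obtain gs where gs: "incr_approx L gs f" and "(\<lambda>n. ereal (I (gs n))) \<longlonglongrightarrow> I_up L I f"
    using someI_ex[of "\<lambda>v. \<exists>gs. incr_approx L gs f \<and> (\<lambda>n. ereal (I (gs n))) \<longlonglongrightarrow> v"]
      fs lim_SUP unfolding I_up_def by blast
  then have "I_up L I f = (SUP n. ereal (I (gs n)))"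
    using LIMSEQ_unique lim_SUP by blast
  also have "\<dots> = (SUP n. ereal (I (fs n)))"
    using SUP_incr_approx_mono[OF gs fs] SUP_incr_approx_mono[OF fs gs] by auto
  finally show ?thesis .
qed

lemma I_down_eq_INF:
  assumes fs: "decr_approx L fs f"
  shows "I_down L I f = (INF n. ereal (I (fs n)))"
proof -
  have lim_INF: "(\<lambda>n. ereal (I (gs n))) \<longlonglongrightarrow> (INF n. ereal (I (gs n)))"
    if "decr_approx L gs f" for gs
    using that by (intro LIMSEQ_INF decseq_SucI) (simp add: I_mono decr_approx_def)
  obtain gs where gs: "decr_approx L gs f" and "(\<lambda>n. ereal (I (gs n))) \<longlonglongrightarrow> I_down L I f"
    using someI_ex[of "\<lambda>v. \<exists>gs. decr_approx L gs f \<and> (\<lambda>n. ereal (I (gs n))) \<longlonglongrightarrow> v"]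
      fs lim_INF unfolding I_down_def by blast
  then have "I_down L I f = (INF n. ereal (I (gs n)))"
    using LIMSEQ_unique lim_INF by blast
  also have "\<dots> = (INF n. ereal (I (fs n)))"
    using INF_decr_approx_mono[OF gs fs] INF_decr_approx_mono[OF fs gs] by auto
  finally show ?thesis .
qed

lemma lower_integral_le_upper_integral: "lower_integral L I f \<le> upper_integral L I f"
  unfolding lower_integral_def upper_integral_def
proof (intro Sup_least Inf_greatest)
  fix a b
  assume "a \<in> {I_down L I g |g. g \<in> L_down L \<and> (\<forall>x. g x \<le> f x)}"
  then obtain g gs where a: "a = I_down L I g" and gs: "decr_approx L gs g"
    and "\<forall>x. g x \<le> f x"
    unfolding L_down_def by blast
  moreover assume "b \<in> {I_up L I h |h. h \<in> L_up L \<and> (\<forall>x. f x \<le> h x)}"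
  then obtain h hs where b: "b = I_up L I h" and hs: "incr_approx L hs h"
    and "\<forall>x. f x \<le> h x"
    unfolding L_up_def by blast
  ultimately show "a \<le> b"
    unfolding a b I_down_eq_INF[OF gs] I_up_eq_SUP[OF hs]
    using INF_approx_le_SUP_approx[OF gs hs] order_trans by blast
qed

end

locale pullback_system = L: daniell_system L I + M: daniell_system M J
  for L :: "('a \<Rightarrow> real) set" and I and M :: "('b \<Rightarrow> real) set" and J +
  fixes \<rho> :: "'a \<Rightarrow> real" and \<phi> :: "'a \<Rightarrow> 'b"
  assumes \<rho>_nonneg: "0 \<le> \<rho> x"
    and pullback_mem: "g \<in> M \<Longrightarrow> (\<lambda>x. \<rho> x * g (\<phi> x)) \<in> L"
    and I_pullback: "g \<in> M \<Longrightarrow> I (\<lambda>x. \<rho> x * g (\<phi> x)) = J g"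
begin

lemma tendsto_pullback:
  "(\<lambda>n. ereal (hs n y)) \<longlonglongrightarrow> h y \<Longrightarrow>
    (\<lambda>n. ereal (\<rho> x * hs n y)) \<longlonglongrightarrow> ereal (\<rho> x) * h y"
  using tendsto_cmult_ereal[of "ereal (\<rho> x)" "\<lambda>n. ereal (hs n y)"] by simp

lemma incr_approx_pullback:
  "incr_approx M hs h \<Longrightarrow>
    incr_approx L (\<lambda>n x. \<rho> x * hs n (\<phi> x)) (\<lambda>x. ereal (\<rho> x) * h (\<phi> x))"
  unfolding incr_approx_def using \<rho>_nonneg
  by (auto simp: pullback_mem tendsto_pullback mult_left_mono)

lemma decr_approx_pullback:
  "decr_approx M hs h \<Longrightarrow>
    decr_approx L (\<lambda>n x. \<rho> x * hs n (\<phi> x)) (\<lambda>x. ereal (\<rho> x) * h (\<phi> x))"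
  unfolding decr_approx_def using \<rho>_nonneg
  by (auto simp: pullback_mem tendsto_pullback mult_left_mono)

lemma I_up_pullback:
  assumes "incr_approx M hs h"
  shows "I_up L I (\<lambda>x. ereal (\<rho> x) * h (\<phi> x)) = I_up M J h"
proof -
  have "hs n \<in> M" for n using assms unfolding incr_approx_def by blast
  then have "(SUP n. ereal (I (\<lambda>x. \<rho> x * hs n (\<phi> x)))) = (SUP n. ereal (J (hs n)))"
    by (simp add: I_pullback)
  then show ?thesis
    using L.I_up_eq_SUP[OF incr_approx_pullback[OF assms]] M.I_up_eq_SUP[OF assms] by simp
qed

lemma I_down_pullback:
  assumes "decr_approx M hs h"
  shows "I_down L I (\<lambda>x. ereal (\<rho> x) * h (\<phi> x)) = I_down M J h"
proof -
  have "hs n \<in> M" for n using assms unfolding decr_approx_def by blast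
  then have "(INF n. ereal (I (\<lambda>x. \<rho> x * hs n (\<phi> x)))) = (INF n. ereal (J (hs n)))"
    by (simp add: I_pullback)
  then show ?thesis
    using L.I_down_eq_INF[OF decr_approx_pullback[OF assms]] M.I_down_eq_INF[OF assms] by simp
qed

lemma upper_integral_pullback_le:
  "upper_integral L I (\<lambda>x. ereal (\<rho> x) * G (\<phi> x)) \<le> upper_integral M J G"
  unfolding upper_integral_def
proof (rule Inf_greatest)
  fix e assume "e \<in> {I_up M J h |h. h \<in> L_up M \<and> (\<forall>y. G y \<le> h y)}"
  then obtain h hs where e: "e = I_up M J h" and hs: "incr_approx M hs h"
    and G_le: "\<forall>y. G y \<le> h y"
    unfolding L_up_def by blast
  have "ereal (\<rho> x) * G (\<phi> x) \<le> ereal (\<rho> x) * h (\<phi> x)" for x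
    using G_le \<rho>_nonneg by (simp add: ereal_mult_left_mono)
  then have "e \<in> {I_up L I k |k. k \<in> L_up L \<and> (\<forall>x. ereal (\<rho> x) * G (\<phi> x) \<le> k x)}"
    using incr_approx_pullback[OF hs] I_up_pullback[OF hs] unfolding e L_up_def
    by (intro CollectI exI[of _ "\<lambda>x. ereal (\<rho> x) * h (\<phi> x)"]) auto
  then show "Inf {I_up L I k |k. k \<in> L_up L \<and> (\<forall>x. ereal (\<rho> x) * G (\<phi> x) \<le> k x)} \<le> e"
    by (rule Inf_lower)
qed

lemma lower_integral_pullback_ge:
  "lower_integral M J G \<le> lower_integral L I (\<lambda>x. ereal (\<rho> x) * G (\<phi> x))"
  unfolding lower_integral_def
proof (rule Sup_least)
  fix e assume "e \<in> {I_down M J h |h. h \<in> L_down M \<and> (\<forall>y. h y \<le> G y)}"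
  then obtain h hs where e: "e = I_down M J h" and hs: "decr_approx M hs h"
    and le_G: "\<forall>y. h y \<le> G y"
    unfolding L_down_def by blast
  have "ereal (\<rho> x) * h (\<phi> x) \<le> ereal (\<rho> x) * G (\<phi> x)" for x
    using le_G \<rho>_nonneg by (simp add: ereal_mult_left_mono)
  then have "e \<in> {I_down L I k |k. k \<in> L_down L \<and> (\<forall>x. k x \<le> ereal (\<rho> x) * G (\<phi> x))}"
    using decr_approx_pullback[OF hs] I_down_pullback[OF hs] unfolding e L_down_def
    by (intro CollectI exI[of _ "\<lambda>x. ereal (\<rho> x) * h (\<phi> x)"]) auto
  then show "e \<le> Sup {I_down L I k |k. k \<in> L_down L \<and> (\<forall>x. k x \<le> ereal (\<rho> x) * G (\<phi> x))}"
    by (rule Sup_upper)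
qed

end

theorem mainTheorem11:
  fixes L :: "('a \<Rightarrow> real) set" and I :: "('a \<Rightarrow> real) \<Rightarrow> real"
    and M :: "('b \<Rightarrow> real) set" and J :: "('b \<Rightarrow> real) \<Rightarrow> real"
    and \<rho> :: "'a \<Rightarrow> real" and \<phi> :: "'a \<Rightarrow> 'b"
  assumes "integral_system L I" and "integral_system M J"
    and "\<forall>x. 0 \<le> \<rho> x"
    and "\<forall>g\<in>M. (\<lambda>x. \<rho> x * g (\<phi> x)) \<in> L \<and> I (\<lambda>x. \<rho> x * g (\<phi> x)) = J g"
  shows "\<forall>g\<in>L1 M J. (\<lambda>x. \<rho> x * g (\<phi> x)) \<in> L1 L I \<and>
           I1 L I (\<lambda>x. \<rho> x * g (\<phi> x)) = I1 M J g"
proof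
  interpret pullback_system L I M J \<rho> \<phi>
    using assms by unfold_locales auto
  fix g assume "g \<in> L1 M J"
  define G where "G y = ereal (g y)" for y
  define F where "F x = ereal (\<rho> x * g (\<phi> x))" for x
  have F_eq: "F = (\<lambda>x. ereal (\<rho> x) * G (\<phi> x))"
    unfolding F_def G_def by simp
  have lower_eq_upper: "lower_integral M J G = upper_integral M J G"
    and finite: "\<bar>upper_integral M J G\<bar> \<noteq> \<infinity>"
    using \<open>g \<in> L1 M J\<close> unfolding L1_def G_def by auto
  have lower: "lower_integral M J G \<le> lower_integral L I F"
    unfolding F_eq by (rule lower_integral_pullback_ge)
  have middle: "lower_integral L I F \<le> upper_integral L I F"
    by (rule L.lower_integral_le_upper_integral)
  have upper: "upper_integral L I F \<le> upper_integral M J G"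
    unfolding F_eq by (rule upper_integral_pullback_le)
  have "upper_integral L I F = upper_integral M J G"
    using upper order_trans[OF lower middle] unfolding lower_eq_upper by (rule antisym)
  moreover have "lower_integral L I F = upper_integral M J G"
    using order_trans[OF middle upper] lower unfolding lower_eq_upper by (rule antisym)
  ultimately show "(\<lambda>x. \<rho> x * g (\<phi> x)) \<in> L1 L I \<and> I1 L I (\<lambda>x. \<rho> x * g (\<phi> x)) = I1 M J g"
    using finite unfolding L1_def I1_def F_def G_def by simp
qed

end
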